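(* Let $(\mathcal{X},\mathcal{B},\lambda)$ be a measure space with $\lambda$ positive and $\sigma$-finite, and let $P$ be a probability measure on $(\mathcal{X},\mathcal{B})$ with density $f$ with respect to $\lambda$, with $f\in\mathcal{L}^2(\mathcal{X},\lambda)$. Let $X_1,\dots,X_N$ be i.i.d. with law $P$, with joint law $P^{\otimes N}$. Let $m\ge 1$ and $f_1,\dots,f_m\in\mathcal{L}^2(\mathcal{X},\lambda)$ with $D_k=\int_{\mathcal{X}} f_k^2\,d\lambda>0$. Assume that condition $\mathcal{H}(p)$ (defined in the context) holds for some $p\in[1,+\infty]$, with constants $C_k$. Then for every $\varepsilon>0$, $$P^{\otimes N}\left\{\forall k\in\{1,\dots,m\},\ d^2(\hat\alpha_k f_k,\overline{\alpha}_k f_k)\le \frac{4\left[1+\log\frac{2m}{\varepsilon}\right]}{N}\left[\frac{\frac1N\sum_{i=1}^N f_k(X_i)^2}{D_k}+C_k\right]\right\}\ge 1-\varepsilon.$$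
   Context: $\mathcal{L}^2=\mathcal{L}^2(\mathcal{X},\lambda)$; for $g,h\in\mathcal{L}^2$, $d^2(g,h)=\int_{\mathcal{X}}(g(x)-h(x))^2\lambda(dx)$. For each $k$, $\overline{\alpha}_k=\arg\min_{\alpha\in\mathbb{R}}d^2(\alpha f_k,f)=\frac{\int f_k f\,d\lambda}{D_k}$ and $\hat\alpha_k=\frac{\frac1N\sum_{i=1}^N f_k(X_i)}{D_k}$. Condition $\mathcal{H}(p)$: for $1<p<\infty$ with $\frac1p+\frac1q=1$, there are known constants $c,c_1,\dots,c_m>0$ such that for all $k$, $\left(\int|f_k|^{2p}d\lambda\right)^{1/p}\le c_k\int|f_k|^2d\lambda$, and $\left(\int|f|^q d\lambda\right)^{1/q}\le c\int|f|\,d\lambda\ (=c)$. For $p=1$: $f\le c$ everywhere for a known constant $c$, and $c_1=\dots=c_m=1$. For $p=+\infty$: each $|f_k|$ is bounded by $\sqrt{c_k\int f_k^2d\lambda}$ for known $c_k$, and $c=1$. In all cases $C_k=c_kc$. *)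

theory Defs
  imports "HOL-Probability.Probability"
begin

definition d2 :: "'a measure \<Rightarrow> ('a \<Rightarrow> real) \<Rightarrow> ('a \<Rightarrow> real) \<Rightarrow> real" where
  "d2 M g h = (\<integral>x. (g x - h x)\<^sup>2 \<partial>M)"

definition sqnorm :: "'a measure \<Rightarrow> ('a \<Rightarrow> real) \<Rightarrow> real" where
  "sqnorm M g = (\<integral>x. (g x)\<^sup>2 \<partial>M)"

definition alpha_bar :: "'a measure \<Rightarrow> ('a \<Rightarrow> real) \<Rightarrow> ('a \<Rightarrow> real) \<Rightarrow> real" where
  "alpha_bar M f g = (\<integral>x. g x * f x \<partial>M) / sqnorm M g"

definition alpha_hat :: "'a measure \<Rightarrow> ('a \<Rightarrow> real) \<Rightarrow> nat \<Rightarrow> (nat \<Rightarrow> 'a) \<Rightarrow> real" where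
  "alpha_hat M g N X = ((\<Sum>i<N. g (X i)) / real N) / sqnorm M g"

definition cond_H :: "'a measure \<Rightarrow> ('a \<Rightarrow> real) \<Rightarrow> (nat \<Rightarrow> 'a \<Rightarrow> real) \<Rightarrow> nat
    \<Rightarrow> ereal \<Rightarrow> real \<Rightarrow> (nat \<Rightarrow> real) \<Rightarrow> bool" where
  "cond_H M f fs m p c cs \<longleftrightarrow> c > 0 \<and> (\<forall>k\<in>{1..m}. cs k > 0) \<and>
   ((p = 1 \<and> (\<forall>x\<in>space M. f x \<le> c) \<and> (\<forall>k\<in>{1..m}. cs k = 1)) \<or>
    (p = \<infinity> \<and> c = 1 \<and>
       (\<forall>k\<in>{1..m}. \<forall>x\<in>space M. \<bar>fs k x\<bar> \<le> sqrt (cs k * sqnorm M (fs k)))) \<or>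
    (\<exists>r::real. p = ereal r \<and> 1 < r \<and>
       (\<forall>k\<in>{1..m}. integrable M (\<lambda>x. \<bar>fs k x\<bar> powr (2 * r)) \<and>
          (\<integral>x. \<bar>fs k x\<bar> powr (2 * r) \<partial>M) powr (1 / r) \<le> cs k * sqnorm M (fs k)) \<and>
       integrable M (\<lambda>x. \<bar>f x\<bar> powr (r / (r - 1))) \<and>
       (\<integral>x. \<bar>f x\<bar> powr (r / (r - 1)) \<partial>M) powr (1 / (r / (r - 1)))
          \<le> c * (\<integral>x. \<bar>f x\<bar> \<partial>M)))"

end

theory Submission
  imports Defs
begin

text \<open>
  Fix \<open>k\<close>, put \<open>Y\<^sub>i = f\<^sub>k(X\<^sub>i)\<close>, \<open>S = \<Sum>\<^sub>i (Y\<^sub>i - E Y)\<close> and \<open>A = \<Sum>\<^sub>i (Y\<^sub>i\<^sup>2 + s\<^sup>2)\<close>, where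
  \<open>E Y\<^sup>2 \<le> s\<^sup>2\<close>. Since \<open>exp (x - x\<^sup>2/2) \<le> 1 + x + x\<^sup>2/2\<close>, the variable \<open>exp (l S - l\<^sup>2 A/2)\<close> has
  mean at most 1 for every \<open>l\<close>; averaging over \<open>l \<sim> N(0, 1/c\<^sup>2)\<close> (the method of mixtures)
  gives \<open>E [c / sqrt (A + c\<^sup>2) exp (S\<^sup>2 / (2 (A + c\<^sup>2)))] \<le> 1\<close>. Markov's inequality for this
  variable and for \<open>A\<close>, with \<open>c\<^sup>2 = N s\<^sup>2/3\<close>, bounds the probability of
  \<open>S\<^sup>2 > 4 (1 + log (1/\<delta>)) A\<close> by \<open>2\<delta>\<close>.
  Condition \<open>H(p)\<close> gives \<open>E Y\<^sup>2 = \<integral> f f\<^sub>k\<^sup>2 d\<lambda> \<le> C\<^sub>k D\<^sub>k\<close> by Hoelder's inequality, and for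
  \<open>s\<^sup>2 = C\<^sub>k D\<^sub>k\<close> the event of the theorem for the index \<open>k\<close> is exactly
  \<open>S\<^sup>2 \<le> 4 (1 + log (1/\<delta>)) A\<close>. A union bound over \<open>k\<close> with \<open>\<delta> = \<epsilon>/(2m)\<close> concludes.
\<close>

section \<open>Elementary inequalities\<close>

lemma exp_diff_half_square_le:
  fixes x :: real
  shows "exp (x - x\<^sup>2/2) \<le> 1 + x + x\<^sup>2/2"
proof -
  define h where "h = (\<lambda>t::real. (1 + t + t\<^sup>2/2) * exp (t\<^sup>2/2 - t))"
  have deriv: "(h has_real_derivative (t * (1 + t/2 + t\<^sup>2/2) * exp (t\<^sup>2/2 - t))) (at t)" for t
    unfolding h_def
    by (rule derivative_eq_intros refl | simp)+ (simp add: field_simps power2_eq_square)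
  have cont: "continuous_on S h" for S
    using deriv by (meson DERIV_isCont continuous_at_imp_continuous_on)
  have pos: "0 < 1 + t/2 + t\<^sup>2/2" for t :: real
  proof -
    have "0 \<le> (t + 1/2)\<^sup>2" by simp
    then show ?thesis by (simp add: power2_eq_square algebra_simps)
  qed
  have "h 0 \<le> h x"
  proof (cases "0 \<le> x")
    case True
    show ?thesis
      by (rule DERIV_nonneg_imp_increasing_open[OF True _ cont])
        (use deriv pos in \<open>metis less_eq_real_def mult_nonneg_nonneg exp_ge_zero\<close>)
  next
    case False
    show ?thesis
    proof (rule DERIV_nonpos_imp_decreasing_open[of x 0, OF _ _ cont])
      show "x \<le> 0" using False by simp
      fix t :: real assume "t < 0"
      then show "\<exists>y. (h has_real_derivative y) (at t) \<and> y \<le> 0"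
        using deriv pos by (metis less_eq_real_def exp_ge_zero mult_nonpos_nonneg)
    qed
  qed
  then have "1 \<le> (1 + x + x\<^sup>2/2) * exp (x\<^sup>2/2 - x)"
    by (simp add: h_def)
  then have "exp (x - x\<^sup>2/2) \<le> (1 + x + x\<^sup>2/2) * exp (x\<^sup>2/2 - x) * exp (x - x\<^sup>2/2)"
    by simp
  also have "\<dots> = 1 + x + x\<^sup>2/2"
    by (simp add: mult.assoc flip: exp_add)
  finally show ?thesis .
qed

lemma nn_integral_normal_density_eq_1:
  "0 < \<sigma> \<Longrightarrow> (\<integral>\<^sup>+x. ennreal (normal_density \<mu> \<sigma> x) \<partial>lborel) = 1"
  by (subst nn_integral_eq_integral) auto

text \<open>Completing the square in \<open>l\<close>.\<close>
lemma nn_integral_normal_density_exp_tilt: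
  fixes S A c :: real
  assumes c: "0 < c" and A: "0 \<le> A"
  shows "(\<integral>\<^sup>+l. ennreal (normal_density 0 (1/c) l * exp (l * S - l\<^sup>2 * A / 2)) \<partial>lborel)
    = ennreal (c / sqrt (A + c\<^sup>2) * exp (S\<^sup>2 / (2 * (A + c\<^sup>2))))"
proof -
  define B where "B = A + c\<^sup>2"
  have B: "0 < B" using c A by (simp add: B_def add_nonneg_pos)
  define K where "K = c / sqrt B * exp (S\<^sup>2 / (2 * B))"
  have K: "0 \<le> K" using B c by (simp add: K_def)
  have prior: "normal_density 0 (1/c) l = c / sqrt (2*pi) * exp (-(l\<^sup>2*c\<^sup>2)/2)" for l
  proof -
    have "sqrt (2 * pi * (1/c)\<^sup>2) = sqrt (2*pi) / c"
      using c by (simp add: real_sqrt_mult power_divide real_sqrt_divide)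
    then show ?thesis using c unfolding normal_density_def by (simp add: field_simps)
  qed
  have posterior: "normal_density (S/B) (1/sqrt B) l
      = sqrt B / sqrt (2*pi) * exp (-((l - S/B)\<^sup>2*B)/2)" for l
  proof -
    have "sqrt (2 * pi * (1/sqrt B)\<^sup>2) = sqrt (2*pi) / sqrt B"
      using B by (simp add: real_sqrt_mult power_divide real_sqrt_divide)
    then show ?thesis using B unfolding normal_density_def by (simp add: field_simps)
  qed
  have square: "-(l\<^sup>2*c\<^sup>2)/2 + (l * S - l\<^sup>2 * A / 2) = S\<^sup>2 / (2 * B) + (-((l - S/B)\<^sup>2*B)/2)" for l
  proof -
    have "(l - S/B)\<^sup>2*B = l\<^sup>2*B - 2*(l*S) + S\<^sup>2/B"
      using B by (simp add: power2_eq_square field_simps)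
    moreover have "l\<^sup>2*B = l\<^sup>2*c\<^sup>2 + l\<^sup>2*A" by (simp add: B_def algebra_simps)
    ultimately show ?thesis by (simp add: diff_divide_distrib add_divide_distrib)
  qed
  have pointwise: "normal_density 0 (1/c) l * exp (l * S - l\<^sup>2 * A / 2)
      = K * normal_density (S/B) (1/sqrt B) l" for l
  proof -
    have "normal_density 0 (1/c) l * exp (l * S - l\<^sup>2 * A / 2)
        = c / sqrt (2*pi) * (exp (S\<^sup>2 / (2 * B)) * exp (-((l - S/B)\<^sup>2*B)/2))"
      by (simp only: prior square exp_add mult.assoc flip: exp_add)
    also have "\<dots> = K * normal_density (S/B) (1/sqrt B) l"
      using B by (simp add: posterior K_def)
    finally show ?thesis .
  qed
  have "(\<integral>\<^sup>+l. ennreal (normal_density 0 (1/c) l * exp (l * S - l\<^sup>2 * A / 2)) \<partial>lborel)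
      = (\<integral>\<^sup>+l. ennreal K * ennreal (normal_density (S/B) (1/sqrt B) l) \<partial>lborel)"
    by (simp add: pointwise ennreal_mult K)
  also have "\<dots> = ennreal K"
    using B by (simp add: nn_integral_cmult nn_integral_normal_density_eq_1)
  finally show ?thesis by (simp add: K_def B_def)
qed

text \<open>Either \<open>A \<ge> 8 c2/\<delta>\<close> and the second summand alone is at least 1, or
  \<open>A + c2 \<le> c2 (1 + 8/\<delta>)\<close> and \<open>S\<^sup>2/(2 (A + c2)) \<ge> 3/2 (1 + ln (1/\<delta>))\<close>.\<close>
lemma deviation_indicator_bound:
  fixes S A c2 \<delta> :: real
  assumes c2: "0 < c2" and \<delta>: "0 < \<delta>" "\<delta> < 1" and A: "3 * c2 \<le> A"
    and deviation: "4 * (1 + ln (1/\<delta>)) * A < S\<^sup>2"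
  shows "1 \<le> sqrt (1 + 8/\<delta>) / exp (3/2 * (1 + ln (1/\<delta>))) *
     (sqrt c2 / sqrt (A + c2) * exp (S\<^sup>2 / (2 * (A + c2)))) + (\<delta>/8) / c2 * A"
proof -
  define L where "L = 1 + ln (1/\<delta>)"
  have "0 < ln (1/\<delta>)" using \<delta> by (intro ln_gt_zero) (simp add: field_simps)
  then have L: "0 < L" unfolding L_def by linarith
  have A_pos: "0 < A" using A c2 by linarith
  have pos: "0 < sqrt (1 + 8/\<delta>)" using \<delta> by (simp add: add_pos_pos)
  have mixture_nonneg:
    "0 \<le> sqrt (1 + 8/\<delta>) / exp (3/2 * L) * (sqrt c2 / sqrt (A + c2) * exp (S\<^sup>2 / (2 * (A + c2))))"
    using pos c2 A_pos by (intro mult_nonneg_nonneg divide_nonneg_nonneg) auto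
  show ?thesis
  proof (cases "8 * c2 / \<delta> \<le> A")
    case True
    then have "1 \<le> (\<delta>/8) / c2 * A"
      using \<delta> c2 by (simp add: field_simps)
    then show ?thesis using mixture_nonneg unfolding L_def by linarith
  next
    case False
    have exponent: "3/2 * L \<le> S\<^sup>2 / (2 * (A + c2))"
    proof -
      have "3 * L * (A + c2) \<le> 4 * L * A" using A L by (simp add: algebra_simps)
      also have "\<dots> \<le> S\<^sup>2" using deviation by (simp add: L_def)
      finally show ?thesis using A_pos c2 by (simp add: field_simps)
    qed
    have prefactor: "1 / sqrt (1 + 8/\<delta>) \<le> sqrt c2 / sqrt (A + c2)"
    proof -
      have "sqrt (A + c2) \<le> sqrt (c2 * (1 + 8/\<delta>))"
        using False \<delta> c2 by (intro real_sqrt_le_mono) (simp add: field_simps)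
      then have "sqrt (A + c2) \<le> sqrt c2 * sqrt (1 + 8/\<delta>)" by (simp add: real_sqrt_mult)
      then show ?thesis using pos c2 A_pos by (simp add: field_simps)
    qed
    have "1 = sqrt (1 + 8/\<delta>) / exp (3/2 * L) * (1 / sqrt (1 + 8/\<delta>) * exp (3/2 * L))"
      using pos by simp
    also have "\<dots> \<le> sqrt (1 + 8/\<delta>) / exp (3/2 * L) *
        (sqrt c2 / sqrt (A + c2) * exp (S\<^sup>2 / (2 * (A + c2))))"
      using exponent prefactor pos c2 A_pos by (intro mult_left_mono mult_mono) auto
    finally have "1 \<le> \<dots>" .
    moreover have "0 \<le> (\<delta>/8) / c2 * A" using \<delta> c2 A_pos by simp
    ultimately show ?thesis unfolding L_def by linarith
  qed
qed

lemma deviation_constant_le: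
  fixes \<delta> :: real
  assumes \<delta>: "0 < \<delta>" "\<delta> \<le> 1"
  shows "sqrt (1 + 8/\<delta>) / exp (3/2 * (1 + ln (1/\<delta>))) + 6 * (\<delta>/8) \<le> 2 * \<delta>"
proof -
  have sqrt_pos: "0 < sqrt (1/\<delta>)" using \<delta> by simp
  have "exp (3/2 * (1 + ln (1/\<delta>))) = exp (3/2) * exp (ln (1/\<delta>)) * exp (1/2 * ln (1/\<delta>))"
    by (simp flip: exp_add add: algebra_simps)
  also have "\<dots> = exp (3/2) * (1/\<delta>) * sqrt (1/\<delta>)"
    using \<delta> by (simp add: powr_half_sqrt[symmetric] powr_def)
  finally have exp_eq: "exp (3/2 * (1 + ln (1/\<delta>))) = exp (3/2) * (1/\<delta>) * sqrt (1/\<delta>)" .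
  have "sqrt (1 + 8/\<delta>) \<le> sqrt (9 * (1/\<delta>))"
    using \<delta> by (intro real_sqrt_le_mono) (simp add: field_simps)
  also have "\<dots> = sqrt 9 * sqrt (1/\<delta>)" by (rule real_sqrt_mult)
  also have "sqrt 9 = (3::real)" using real_sqrt_abs[of 3] by simp
  finally have "sqrt (1 + 8/\<delta>) / exp (3/2 * (1 + ln (1/\<delta>)))
      \<le> 3 * sqrt (1/\<delta>) / (exp (3/2) * (1/\<delta>) * sqrt (1/\<delta>))"
    unfolding exp_eq using \<delta> sqrt_pos by (intro divide_right_mono) auto
  also have "\<dots> = 3 * \<delta> / exp (3/2)" using sqrt_pos \<delta> by (simp add: field_simps)
  also have "\<dots> \<le> 3 * \<delta> / (5/2)"
    using exp_ge_add_one_self[of "3/2"] \<delta> by (intro divide_left_mono) auto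
  finally show ?thesis using \<delta> by simp
qed

section \<open>The method of mixtures\<close>

locale bounded_second_moment = prob_space P for P :: "'a measure" +
  fixes Y :: "'a \<Rightarrow> real" and s2 :: real
  assumes borel_measurable_Y: "Y \<in> borel_measurable P"
    and integrable_square: "integrable P (\<lambda>x. (Y x)\<^sup>2)"
    and second_moment_le: "expectation (\<lambda>x. (Y x)\<^sup>2) \<le> s2"
begin

declare borel_measurable_Y[measurable]

lemma integrable_Y: "integrable P Y"
  by (rule square_integrable_imp_integrable[OF borel_measurable_Y integrable_square])

lemma s2_nonneg: "0 \<le> s2"
proof -
  have "0 \<le> expectation (\<lambda>x. (Y x)\<^sup>2)" by (rule Bochner_Integration.integral_nonneg) simp
  then show ?thesis using second_moment_le by linarith
qed

definition centered_sum :: "nat \<Rightarrow> (nat \<Rightarrow> 'a) \<Rightarrow> real" where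
  "centered_sum N X = (\<Sum>i<N. Y (X i) - expectation Y)"

definition square_sum :: "nat \<Rightarrow> (nat \<Rightarrow> 'a) \<Rightarrow> real" where
  "square_sum N X = (\<Sum>i<N. (Y (X i))\<^sup>2 + s2)"

lemma borel_measurable_centered_sum[measurable]:
  "centered_sum N \<in> borel_measurable (PiM {..<N} (\<lambda>_. P))"
  unfolding centered_sum_def by measurable

lemma borel_measurable_square_sum[measurable]:
  "square_sum N \<in> borel_measurable (PiM {..<N} (\<lambda>_. P))"
  unfolding square_sum_def by measurable

lemma square_sum_nonneg: "0 \<le> square_sum N X"
  unfolding square_sum_def using s2_nonneg by (intro sum_nonneg) simp

lemma square_sum_ge: "real N * s2 \<le> square_sum N X"
  using sum_mono[of "{..<N}" "\<lambda>_. s2" "\<lambda>i. (Y (X i))\<^sup>2 + s2"] by (simp add: square_sum_def)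

text \<open>With \<open>x = l Y\<close>, the bound \<open>exp (x - x\<^sup>2/2) \<le> 1 + x + x\<^sup>2/2\<close> dominates the tilt by a
  quadratic polynomial in \<open>Y\<close>, whose mean is at most one since \<open>1 + u \<le> exp u\<close>.\<close>
lemma nn_integral_exp_tilt_le_1:
  "(\<integral>\<^sup>+x. ennreal (exp (l * (Y x - expectation Y) - l\<^sup>2 * ((Y x)\<^sup>2 + s2) / 2)) \<partial>P) \<le> 1"
proof -
  define \<mu> where "\<mu> = expectation Y"
  define K where "K = exp (- l * \<mu> - l\<^sup>2 * s2 / 2)"
  have K: "0 < K" by (simp add: K_def)
  define q where "q x = K * (1 + l * Y x + l\<^sup>2 * (Y x)\<^sup>2 / 2)" for x
  have tilt_le: "exp (l * (Y x - \<mu>) - l\<^sup>2 * ((Y x)\<^sup>2 + s2) / 2) \<le> q x" for x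
  proof -
    have "exp (l * (Y x - \<mu>) - l\<^sup>2 * ((Y x)\<^sup>2 + s2) / 2) = K * exp (l * Y x - (l * Y x)\<^sup>2 / 2)"
      by (simp add: K_def flip: exp_add) (simp add: algebra_simps power2_eq_square)
    also have "\<dots> \<le> K * (1 + l * Y x + (l * Y x)\<^sup>2 / 2)"
      using exp_diff_half_square_le[of "l * Y x"] K by simp
    finally show ?thesis by (simp add: q_def power_mult_distrib)
  qed
  have q_nonneg: "0 \<le> q x" for x
    using order.trans[OF exp_ge_zero tilt_le] .
  have integrable_q: "integrable P q"
    unfolding q_def using integrable_Y integrable_square by simp
  have "expectation q = K * (1 + l * \<mu> + l\<^sup>2 * expectation (\<lambda>x. (Y x)\<^sup>2) / 2)"
    unfolding q_def \<mu>_def using integrable_Y integrable_square by (simp add: prob_space)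
  also have "\<dots> \<le> K * (1 + (l * \<mu> + l\<^sup>2 * s2 / 2))"
    using second_moment_le K by (intro mult_left_mono) (auto intro: mult_left_mono)
  also have "\<dots> \<le> K * exp (l * \<mu> + l\<^sup>2 * s2 / 2)"
    using K exp_ge_add_one_self by (intro mult_left_mono) auto
  also have "\<dots> = 1" by (simp add: K_def flip: exp_add)
  finally have "expectation q \<le> 1" .
  have "(\<integral>\<^sup>+x. ennreal (exp (l * (Y x - \<mu>) - l\<^sup>2 * ((Y x)\<^sup>2 + s2) / 2)) \<partial>P)
      \<le> (\<integral>\<^sup>+x. ennreal (q x) \<partial>P)"
    by (intro nn_integral_mono ennreal_leI tilt_le)
  also have "\<dots> = ennreal (expectation q)"
    by (rule nn_integral_eq_integral[OF integrable_q]) (simp add: q_nonneg)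
  also have "\<dots> \<le> 1" using \<open>expectation q \<le> 1\<close> by simp
  finally show ?thesis by (simp add: \<mu>_def)
qed

lemma nn_integral_PiM_exp_tilt_le_1:
  "(\<integral>\<^sup>+X. ennreal (exp (l * centered_sum N X - l\<^sup>2 * square_sum N X / 2)) \<partial>PiM {..<N} (\<lambda>_. P)) \<le> 1"
proof -
  interpret PP: product_prob_space "\<lambda>_. P" "{..<N}"
    by (simp add: product_prob_space_def product_prob_space_axioms_def product_sigma_finite_def
        prob_space_imp_sigma_finite prob_space_axioms)
  define g where "g y = l * (Y y - expectation Y) - l\<^sup>2 * ((Y y)\<^sup>2 + s2) / 2" for y
  have [measurable]: "g \<in> borel_measurable P" unfolding g_def by measurable
  have factor: "ennreal (exp (l * centered_sum N X - l\<^sup>2 * square_sum N X / 2))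
      = (\<Prod>i<N. ennreal (exp (g (X i))))" for X
  proof -
    have "l * centered_sum N X - l\<^sup>2 * square_sum N X / 2 = (\<Sum>i<N. g (X i))"
      by (simp add: g_def centered_sum_def square_sum_def sum_subtractf sum_distrib_left
          sum_divide_distrib right_diff_distrib)
    then show ?thesis by (simp add: exp_sum prod_ennreal)
  qed
  have "(\<integral>\<^sup>+X. ennreal (exp (l * centered_sum N X - l\<^sup>2 * square_sum N X / 2)) \<partial>PiM {..<N} (\<lambda>_. P))
      = (\<Prod>i<N. (\<integral>\<^sup>+y. ennreal (exp (g y)) \<partial>P))"
    unfolding factor by (rule PP.product_nn_integral_prod) auto
  also have "\<dots> \<le> 1"
    using nn_integral_exp_tilt_le_1[of l] by (intro prod_le_1) (simp_all add: g_def)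
  finally show ?thesis .
qed

text \<open>The average of \<open>exp (l * centered_sum N X - l\<^sup>2 * square_sum N X / 2)\<close> over
  \<open>l \<sim> N(0, 1/c2)\<close>, by completing the square.\<close>
definition mixture :: "real \<Rightarrow> nat \<Rightarrow> (nat \<Rightarrow> 'a) \<Rightarrow> real" where
  "mixture c2 N X = sqrt c2 / sqrt (square_sum N X + c2)
    * exp ((centered_sum N X)\<^sup>2 / (2 * (square_sum N X + c2)))"

lemma borel_measurable_mixture[measurable]:
  "mixture c2 N \<in> borel_measurable (PiM {..<N} (\<lambda>_. P))"
  unfolding mixture_def by measurable

lemma nn_integral_PiM_mixture_le_1:
  assumes c2: "0 < c2"
  shows "(\<integral>\<^sup>+X. ennreal (mixture c2 N X) \<partial>PiM {..<N} (\<lambda>_. P)) \<le> 1"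
proof -
  let ?PN = "PiM {..<N} (\<lambda>_. P)"
  interpret PN: prob_space ?PN by (intro prob_space_PiM prob_space_axioms)
  interpret pair_sigma_finite lborel ?PN
    by (simp add: pair_sigma_finite_def lborel.sigma_finite_measure_axioms PN.sigma_finite_measure_axioms)
  define c where "c = sqrt c2"
  have c: "0 < c" and c_square: "c\<^sup>2 = c2" using c2 by (simp_all add: c_def)
  define h where "h l X = ennreal (normal_density 0 (1/c) l *
      exp (l * centered_sum N X - l\<^sup>2 * square_sum N X / 2))" for l X
  have "(\<integral>\<^sup>+X. ennreal (mixture c2 N X) \<partial>?PN) = (\<integral>\<^sup>+X. (\<integral>\<^sup>+l. h l X \<partial>lborel) \<partial>?PN)"
    unfolding h_def mixture_def using square_sum_nonneg
    by (simp add: nn_integral_normal_density_exp_tilt[OF c] c_square flip: c_def)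
  also have "\<dots> = (\<integral>\<^sup>+l. (\<integral>\<^sup>+X. h l X \<partial>?PN) \<partial>lborel)"
    by (rule Fubini') (simp add: h_def)
  also have "\<dots> = (\<integral>\<^sup>+l. ennreal (normal_density 0 (1/c) l) * (\<integral>\<^sup>+X. ennreal
      (exp (l * centered_sum N X - l\<^sup>2 * square_sum N X / 2)) \<partial>?PN) \<partial>lborel)"
    unfolding h_def
    by (intro nn_integral_cong, subst nn_integral_cmult[symmetric]) (auto simp: ennreal_mult)
  also have "\<dots> \<le> (\<integral>\<^sup>+l. ennreal (normal_density 0 (1/c) l) * 1 \<partial>lborel)"
    by (intro nn_integral_mono mult_left_mono nn_integral_PiM_exp_tilt_le_1) auto
  also have "\<dots> = 1" using c by (simp add: nn_integral_normal_density_eq_1)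
  finally show ?thesis .
qed

lemma nn_integral_PiM_square_sum_le:
  "(\<integral>\<^sup>+X. ennreal (square_sum N X) \<partial>PiM {..<N} (\<lambda>_. P)) \<le> ennreal (real N * (2 * s2))"
proof -
  let ?PN = "PiM {..<N} (\<lambda>_. P)"
  have coordinate: "(\<integral>\<^sup>+X. ennreal ((Y (X i))\<^sup>2 + s2) \<partial>?PN) \<le> ennreal (2 * s2)" if i: "i < N" for i
  proof -
    have "(\<integral>\<^sup>+X. ennreal ((Y (X i))\<^sup>2 + s2) \<partial>?PN)
        = (\<integral>\<^sup>+y. ennreal ((Y y)\<^sup>2 + s2) \<partial>distr ?PN P (\<lambda>X. X i))"
      using i by (subst nn_integral_distr) (auto intro: measurable_component_singleton)
    also have "distr ?PN P (\<lambda>X. X i) = P"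
      using i by (intro distr_PiM_component prob_space_axioms) auto
    also have "(\<integral>\<^sup>+y. ennreal ((Y y)\<^sup>2 + s2) \<partial>P) = ennreal (expectation (\<lambda>y. (Y y)\<^sup>2) + s2)"
      using integrable_square s2_nonneg by (subst nn_integral_eq_integral) (auto simp: prob_space)
    also have "\<dots> \<le> ennreal (2 * s2)" using second_moment_le by (intro ennreal_leI) simp
    finally show ?thesis .
  qed
  have "(\<integral>\<^sup>+X. ennreal (square_sum N X) \<partial>?PN) = (\<Sum>i<N. (\<integral>\<^sup>+X. ennreal ((Y (X i))\<^sup>2 + s2) \<partial>?PN))"
    using s2_nonneg by (simp add: square_sum_def sum_ennreal[symmetric] nn_integral_sum del: sum_ennreal)
  also have "\<dots> \<le> (\<Sum>i<N. ennreal (2 * s2))"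
    using coordinate by (intro sum_mono) auto
  also have "\<dots> = ennreal (real N * (2 * s2))"
    using s2_nonneg by (simp add: ennreal_mult ennreal_of_nat_eq_real_of_nat)
  finally show ?thesis .
qed

text \<open>Markov's inequality, applied at once to the mixture and to \<open>square_sum\<close>.\<close>
lemma emeasure_deviation_le:
  assumes s2: "0 < s2" and N: "0 < N" and \<delta>: "0 < \<delta>" "\<delta> < 1"
  shows "emeasure (PiM {..<N} (\<lambda>_. P)) {X \<in> space (PiM {..<N} (\<lambda>_. P)).
      4 * (1 + ln (1/\<delta>)) * square_sum N X < (centered_sum N X)\<^sup>2} \<le> ennreal (2 * \<delta>)"
    (is "emeasure ?PN ?E \<le> _")
proof -
  define c2 where "c2 = real N * s2 / 3"
  have c2: "0 < c2" using N s2 by (simp add: c2_def)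
  define a where "a = sqrt (1 + 8/\<delta>) / exp (3/2 * (1 + ln (1/\<delta>)))"
  define b where "b = (\<delta>/8) / c2"
  have a: "0 \<le> a" and b: "0 \<le> b" using \<delta> c2 by (simp_all add: a_def b_def)
  have square_sum_ge: "3 * c2 \<le> square_sum N X" for X
    using square_sum_ge[of N X] by (simp add: c2_def)
  have mixture_nonneg: "0 \<le> mixture c2 N X" for X
    using c2 square_sum_ge[of X] by (simp add: mixture_def)
  have indicator_le: "indicator ?E X \<le> ennreal (a * mixture c2 N X + b * square_sum N X)" for X
  proof (cases "X \<in> ?E")
    case True
    then have "1 \<le> a * mixture c2 N X + b * square_sum N X"
      unfolding a_def b_def mixture_def
      using deviation_indicator_bound[OF c2 \<delta> square_sum_ge] by auto
    then show ?thesis using True by (simp add: ennreal_leI)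
  qed simp
  have "?E \<in> sets ?PN" by measurable
  then have "emeasure ?PN ?E = (\<integral>\<^sup>+X. indicator ?E X \<partial>?PN)" by simp
  also have "\<dots> \<le> (\<integral>\<^sup>+X. ennreal (a * mixture c2 N X + b * square_sum N X) \<partial>?PN)"
    by (intro nn_integral_mono indicator_le)
  also have "\<dots> = (\<integral>\<^sup>+X. ennreal a * ennreal (mixture c2 N X) + ennreal b * ennreal (square_sum N X) \<partial>?PN)"
    using a b mixture_nonneg square_sum_nonneg by (simp add: ennreal_mult)
  also have "\<dots> = ennreal a * (\<integral>\<^sup>+X. ennreal (mixture c2 N X) \<partial>?PN)
      + ennreal b * (\<integral>\<^sup>+X. ennreal (square_sum N X) \<partial>?PN)"
    by (subst nn_integral_add) (measurable, measurable, simp add: nn_integral_cmult)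
  also have "\<dots> \<le> ennreal a * 1 + ennreal b * ennreal (real N * (2 * s2))"
    using c2 by (intro add_mono mult_left_mono nn_integral_PiM_mixture_le_1
        nn_integral_PiM_square_sum_le) auto
  also have "\<dots> = ennreal (a + 6 * (\<delta>/8))"
    using a b c2 s2 N
    by (simp add: ennreal_mult[symmetric] ennreal_plus[symmetric] b_def c2_def field_simps
        del: ennreal_plus)
  also have "\<dots> \<le> ennreal (2 * \<delta>)"
    using deviation_constant_le[of \<delta>] \<delta> by (intro ennreal_leI) (simp add: a_def)
  finally show ?thesis .
qed

lemma prob_deviation_le:
  assumes "0 < s2" "0 < N" "0 < \<delta>"
  shows "measure (PiM {..<N} (\<lambda>_. P)) {X \<in> space (PiM {..<N} (\<lambda>_. P)).
      4 * (1 + ln (1/\<delta>)) * square_sum N X < (centered_sum N X)\<^sup>2} \<le> 2 * \<delta>"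
    (is "measure ?PN ?E \<le> _")
proof -
  interpret PN: prob_space ?PN by (intro prob_space_PiM prob_space_axioms)
  show ?thesis
  proof (cases "\<delta> < 1")
    case True
    then show ?thesis
      using emeasure_deviation_le[OF assms True] assms(3) by (simp add: PN.emeasure_eq_measure)
  next
    case False
    then show ?thesis using PN.prob_le_1[of ?E] by linarith
  qed
qed
end

section \<open>Weighted second moments under condition H(p)\<close>

lemma integrable_integral_le_of_nonneg_le:
  fixes u h :: "'a \<Rightarrow> real"
  assumes h: "integrable M h" and u: "u \<in> borel_measurable M"
    and nonneg: "\<And>x. x \<in> space M \<Longrightarrow> 0 \<le> u x" and le: "\<And>x. x \<in> space M \<Longrightarrow> u x \<le> h x"
  shows "integrable M u \<and> integral\<^sup>L M u \<le> integral\<^sup>L M h"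
proof
  show integrable_u: "integrable M u"
  proof (rule Bochner_Integration.integrable_bound[OF h u], intro AE_I2 impI)
    fix x assume "x \<in> space M"
    with nonneg le show "norm (u x) \<le> norm (h x)" by force
  qed
  show "integral\<^sup>L M u \<le> integral\<^sup>L M h"
    using le by (intro integral_mono integrable_u h)
qed

lemma prob_space_density_integral_eq_1:
  fixes f :: "'a \<Rightarrow> real"
  assumes [measurable]: "f \<in> borel_measurable M" and nonneg: "\<forall>x\<in>space M. 0 \<le> f x"
    and "prob_space (density M (\<lambda>x. ennreal (f x)))"
  shows "integrable M f \<and> integral\<^sup>L M f = 1"
proof
  have "(\<integral>\<^sup>+x. ennreal (f x) \<partial>M) = emeasure (density M (\<lambda>x. ennreal (f x))) (space M)"
    by (subst emeasure_density) (auto intro: nn_integral_cong)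
  also have "\<dots> = 1"
    using prob_space.emeasure_space_1[OF assms(3)] by simp
  finally have nn_integral_1: "(\<integral>\<^sup>+x. ennreal (f x) \<partial>M) = 1" .
  show integrable_f: "integrable M f"
    by (rule integrableI_nonneg) (use nonneg nn_integral_1 in \<open>simp_all\<close>)
  have "ennreal (integral\<^sup>L M f) = 1"
    using nn_integral_1 nonneg by (simp add: nn_integral_eq_integral[OF integrable_f])
  then show "integral\<^sup>L M f = 1"
    using nonneg by simp
qed

lemma weighted_square_le_of_bounded_weight:
  fixes f g :: "'a \<Rightarrow> real"
  assumes [measurable]: "f \<in> borel_measurable M" "g \<in> borel_measurable M"
    and g: "integrable M (\<lambda>x. (g x)\<^sup>2)" and f: "\<forall>x\<in>space M. 0 \<le> f x \<and> f x \<le> c"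
  shows "integrable M (\<lambda>x. f x * (g x)\<^sup>2) \<and> (\<integral>x. f x * (g x)\<^sup>2 \<partial>M) \<le> c * sqnorm M g"
proof -
  have "(\<lambda>x. f x * (g x)\<^sup>2) \<in> borel_measurable M" by measurable
  moreover have "f x * (g x)\<^sup>2 \<le> c * (g x)\<^sup>2" if "x \<in> space M" for x
    using f that by (intro mult_right_mono) auto
  ultimately show ?thesis
    using integrable_integral_le_of_nonneg_le[of M "\<lambda>x. c * (g x)\<^sup>2"] g f
    by (simp add: sqnorm_def)
qed

lemma weighted_square_le_of_bounded_square:
  fixes f g :: "'a \<Rightarrow> real"
  assumes [measurable]: "f \<in> borel_measurable M" "g \<in> borel_measurable M"
    and f: "\<forall>x\<in>space M. 0 \<le> f x" "integrable M f \<and> integral\<^sup>L M f = 1"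
    and g: "\<forall>x\<in>space M. \<bar>g x\<bar> \<le> sqrt K"
  shows "integrable M (\<lambda>x. f x * (g x)\<^sup>2) \<and> (\<integral>x. f x * (g x)\<^sup>2 \<partial>M) \<le> K"
proof -
  have "(g x)\<^sup>2 \<le> K" if x: "x \<in> space M" for x
  proof -
    have "0 \<le> sqrt K" using g x abs_ge_zero order.trans by blast
    moreover have "\<bar>g x\<bar>\<^sup>2 \<le> (sqrt K)\<^sup>2" using g x by (intro power_mono) auto
    ultimately show ?thesis by simp
  qed
  then have "f x * (g x)\<^sup>2 \<le> K * f x" if "x \<in> space M" for x
    using f that mult_left_mono[of "(g x)\<^sup>2" K "f x"] by (simp add: mult.commute)
  moreover have "(\<lambda>x. f x * (g x)\<^sup>2) \<in> borel_measurable M" by measurable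
  ultimately show ?thesis
    using integrable_integral_le_of_nonneg_le[of M "\<lambda>x. K * f x"] f by simp
qed

lemma power2_powr_eq_abs_powr: "((x::real)\<^sup>2) powr r = \<bar>x\<bar> powr (2 * r)"
  by (cases "x = 0") (simp_all add: powr_powr[symmetric] powr_realpow[symmetric])

lemma le_powr_of_powr_inverse_le:
  fixes I a r :: real
  assumes "0 \<le> I" "I powr (1/r) \<le> a" "0 < r"
  shows "I \<le> a powr r"
proof -
  have "I = (I powr (1/r)) powr r" using assms by (simp add: powr_powr)
  also have "\<dots> \<le> a powr r" using assms by (intro powr_mono2) auto
  finally show ?thesis .
qed

text \<open>Hoelder's inequality for the exponents \<open>r\<close> and \<open>r/(r - 1)\<close>, in the form obtained by
  integrating Young's inequality.\<close>
lemma weighted_square_le_Hoelder: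
  fixes f g :: "'a \<Rightarrow> real" and r a b :: real
  assumes [measurable]: "f \<in> borel_measurable M" "g \<in> borel_measurable M"
    and f: "\<forall>x\<in>space M. 0 \<le> f x" and r: "1 < r"
    and integrable_g: "integrable M (\<lambda>x. \<bar>g x\<bar> powr (2*r))"
    and norm_g: "(\<integral>x. \<bar>g x\<bar> powr (2*r) \<partial>M) powr (1/r) \<le> a"
    and integrable_f: "integrable M (\<lambda>x. \<bar>f x\<bar> powr (r/(r-1)))"
    and norm_f: "(\<integral>x. \<bar>f x\<bar> powr (r/(r-1)) \<partial>M) powr (1/(r/(r-1))) \<le> b"
    and a: "0 < a" and b: "0 < b"
  shows "integrable M (\<lambda>x. f x * (g x)\<^sup>2) \<and> (\<integral>x. f x * (g x)\<^sup>2 \<partial>M) \<le> a * b"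
proof -
  define q where "q = r/(r-1)"
  have q: "1 < q" and rq: "1/r + 1/q = 1" using r by (simp_all add: q_def field_simps)
  define h where "h x = a * b / (a powr r * r) * \<bar>g x\<bar> powr (2*r) + a * b / (b powr q * q) * \<bar>f x\<bar> powr q" for x
  have integrable_h: "integrable M h" unfolding h_def q_def using integrable_g integrable_f by simp
  have "f x * (g x)\<^sup>2 \<le> h x" if x: "x \<in> space M" for x
  proof -
    have "f x * (g x)\<^sup>2 = a * b * (((g x)\<^sup>2 / a) * (f x / b))" using a b by simp
    also have "\<dots> \<le> a * b * (((g x)\<^sup>2 / a) powr r / r + (f x / b) powr q / q)"
      using a b f x r q rq by (intro mult_left_mono Youngs_inequality) auto
    also have "\<dots> = h x"
      using a b f x by (simp add: h_def powr_divide power2_powr_eq_abs_powr field_simps)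
    finally show ?thesis .
  qed
  moreover have "(\<lambda>x. f x * (g x)\<^sup>2) \<in> borel_measurable M" by measurable
  ultimately have bound: "integrable M (\<lambda>x. f x * (g x)\<^sup>2) \<and> (\<integral>x. f x * (g x)\<^sup>2 \<partial>M) \<le> integral\<^sup>L M h"
    using integrable_integral_le_of_nonneg_le[OF integrable_h] f by simp
  have "(\<integral>x. \<bar>g x\<bar> powr (2*r) \<partial>M) \<le> a powr r"
    using norm_g r by (intro le_powr_of_powr_inverse_le Bochner_Integration.integral_nonneg) auto
  moreover have "(\<integral>x. \<bar>f x\<bar> powr q \<partial>M) \<le> b powr q"
    using norm_f q unfolding q_def[symmetric]
    by (intro le_powr_of_powr_inverse_le Bochner_Integration.integral_nonneg) auto
  moreover have "integral\<^sup>L M h = a * b / (a powr r * r) * (\<integral>x. \<bar>g x\<bar> powr (2*r) \<partial>M)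
      + a * b / (b powr q * q) * (\<integral>x. \<bar>f x\<bar> powr q \<partial>M)"
    unfolding h_def q_def using integrable_g integrable_f by simp
  ultimately have "integral\<^sup>L M h \<le> a * b / (a powr r * r) * a powr r + a * b / (b powr q * q) * b powr q"
    using a b r q by (simp only:) (intro add_mono mult_left_mono; simp)
  also have "\<dots> = a * b * (1/r + 1/q)"
    using a b r q by (simp add: field_simps)
  finally show ?thesis using bound rq by simp
qed

lemma cond_H_weighted_square_le:
  fixes f :: "'a \<Rightarrow> real" and fs :: "nat \<Rightarrow> 'a \<Rightarrow> real"
  assumes [measurable]: "f \<in> borel_measurable M" and f: "\<forall>x\<in>space M. 0 \<le> f x"
    and "prob_space (density M (\<lambda>x. ennreal (f x)))"
    and [measurable]: "fs k \<in> borel_measurable M" and "integrable M (\<lambda>x. (fs k x)\<^sup>2)"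
    and D: "sqnorm M (fs k) > 0" and H: "cond_H M f fs m p c cs" and k: "k \<in> {1..m}"
  shows "integrable M (\<lambda>x. f x * (fs k x)\<^sup>2) \<and> (\<integral>x. f x * (fs k x)\<^sup>2 \<partial>M) \<le> cs k * c * sqnorm M (fs k)"
proof -
  have density: "integrable M f \<and> integral\<^sup>L M f = 1"
    using prob_space_density_integral_eq_1 assms(1-3) by blast
  have c: "0 < c" and cs: "0 < cs k" using H k by (auto simp: cond_H_def)
  consider (one) "\<forall>x\<in>space M. f x \<le> c" "cs k = 1"
    | (infinity) "c = 1" "\<forall>x\<in>space M. \<bar>fs k x\<bar> \<le> sqrt (cs k * sqnorm M (fs k))"
    | (finite) r where "1 < r" "integrable M (\<lambda>x. \<bar>fs k x\<bar> powr (2 * r))"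
        "(\<integral>x. \<bar>fs k x\<bar> powr (2 * r) \<partial>M) powr (1 / r) \<le> cs k * sqnorm M (fs k)"
        "integrable M (\<lambda>x. \<bar>f x\<bar> powr (r / (r - 1)))"
        "(\<integral>x. \<bar>f x\<bar> powr (r / (r - 1)) \<partial>M) powr (1 / (r / (r - 1))) \<le> c * (\<integral>x. \<bar>f x\<bar> \<partial>M)"
    using H k unfolding cond_H_def by blast
  then show ?thesis
  proof cases
    case one
    then show ?thesis using weighted_square_le_of_bounded_weight[of f M "fs k" c] f assms(5) by simp
  next
    case infinity
    then show ?thesis using weighted_square_le_of_bounded_square[OF _ _ f density] by simp
  next
    case finite
    have "(\<integral>x. \<bar>f x\<bar> \<partial>M) = 1"
      using f density by (simp add: Bochner_Integration.integral_cong[of M M "\<lambda>x. \<bar>f x\<bar>" f])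
    then show ?thesis
      using weighted_square_le_Hoelder[OF _ _ f finite] c cs D by (simp add: ac_simps)
  qed
qed

section \<open>Deviation of the estimators\<close>

lemma (in prob_space) prob_all_ge_of_union_bound:
  assumes "finite I"
    and "\<And>i. i \<in> I \<Longrightarrow> {x \<in> space M. \<not> Q i x} \<in> events \<and> prob {x \<in> space M. \<not> Q i x} \<le> e"
    and "real (card I) * e \<le> \<epsilon>"
  shows "1 - \<epsilon> \<le> prob {x \<in> space M. \<forall>i\<in>I. Q i x}"
proof -
  let ?bad = "\<lambda>i. {x \<in> space M. \<not> Q i x}"
  have "prob (\<Union>i\<in>I. ?bad i) \<le> (\<Sum>i\<in>I. prob (?bad i))"
    using assms(1,2) by (intro finite_measure_subadditive_finite) auto
  also have "\<dots> \<le> real (card I) * e"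
    using assms(2) sum_mono[of I "\<lambda>i. prob (?bad i)" "\<lambda>_. e"] by simp
  finally have "prob (\<Union>i\<in>I. ?bad i) \<le> \<epsilon>" using assms(3) by linarith
  moreover have "{x \<in> space M. \<forall>i\<in>I. Q i x} = space M - (\<Union>i\<in>I. ?bad i)" by auto
  moreover have "(\<Union>i\<in>I. ?bad i) \<in> events" using assms(1,2) by auto
  ultimately show ?thesis by (simp add: prob_compl)
qed

lemma d2_scaled: "d2 M (\<lambda>x. a * g x) (\<lambda>x. b * g x) = (a - b)\<^sup>2 * sqnorm M g"
proof -
  have "(a * g x - b * g x)\<^sup>2 = (a - b)\<^sup>2 * (g x)\<^sup>2" for x by (simp add: power2_eq_square algebra_simps)
  then show ?thesis by (simp add: d2_def sqnorm_def)
qed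

lemma d2_alpha_hat_alpha_bar:
  assumes "0 < N"
  shows "d2 M (\<lambda>x. alpha_hat M g N X * g x) (\<lambda>x. alpha_bar M f g * g x)
    = ((\<Sum>i<N. g (X i)) - real N * (\<integral>x. g x * f x \<partial>M))\<^sup>2 / ((real N)\<^sup>2 * sqnorm M g)"
proof (cases "sqnorm M g = 0")
  case False
  have "alpha_hat M g N X - alpha_bar M f g
      = ((\<Sum>i<N. g (X i)) - real N * (\<integral>x. g x * f x \<partial>M)) / (real N * sqnorm M g)"
    using assms False by (simp add: alpha_hat_def alpha_bar_def field_simps)
  then show ?thesis
    using False by (simp add: d2_scaled power_divide power_mult_distrib power2_eq_square)
qed (simp add: d2_def alpha_hat_def alpha_bar_def)

lemma prob_alpha_hat_deviation_le:
  fixes M :: "'a measure" and f g :: "'a \<Rightarrow> real" and N :: nat and C \<delta> :: real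
  defines "P \<equiv> density M (\<lambda>x. ennreal (f x))"
  defines "E \<equiv> {X \<in> space (PiM {..<N} (\<lambda>_. P)).
    \<not> d2 M (\<lambda>x. alpha_hat M g N X * g x) (\<lambda>x. alpha_bar M f g * g x)
      \<le> 4 * (1 + ln (1/\<delta>)) / real N * (((\<Sum>i<N. (g (X i))\<^sup>2) / real N) / sqnorm M g + C)}"
  assumes [measurable]: "f \<in> borel_measurable M" and f: "\<forall>x\<in>space M. 0 \<le> f x"
    and "prob_space P"
    and [measurable]: "g \<in> borel_measurable M" and D: "0 < sqnorm M g"
    and weighted: "integrable M (\<lambda>x. f x * (g x)\<^sup>2) \<and> (\<integral>x. f x * (g x)\<^sup>2 \<partial>M) \<le> C * sqnorm M g"
    and C: "0 < C" and N: "0 < N" and \<delta>: "0 < \<delta>"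
  shows "E \<in> sets (PiM {..<N} (\<lambda>_. P)) \<and> measure (PiM {..<N} (\<lambda>_. P)) E \<le> 2 * \<delta>"
proof -
  have integral_P: "integral\<^sup>L P h = (\<integral>x. f x * h x \<partial>M)" if "h \<in> borel_measurable M" for h
    unfolding P_def using f that by (simp add: integral_density)
  interpret bounded_second_moment P g "C * sqnorm M g"
  proof (intro bounded_second_moment.intro bounded_second_moment_axioms.intro \<open>prob_space P\<close>)
    show "g \<in> borel_measurable P" by (simp add: P_def)
    show "integrable P (\<lambda>x. (g x)\<^sup>2)"
      unfolding P_def using f weighted by (subst integrable_density) auto
    show "integral\<^sup>L P (\<lambda>x. (g x)\<^sup>2) \<le> C * sqnorm M g"
      using weighted by (simp add: integral_P)
  qed
  define L where "L = 1 + ln (1/\<delta>)"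
  have "E = {X \<in> space (PiM {..<N} (\<lambda>_. P)). 4 * L * square_sum N X < (centered_sum N X)\<^sup>2}"
  proof -
    have "d2 M (\<lambda>x. alpha_hat M g N X * g x) (\<lambda>x. alpha_bar M f g * g x)
        \<le> 4 * L / real N * (((\<Sum>i<N. (g (X i))\<^sup>2) / real N) / sqnorm M g + C)
      \<longleftrightarrow> (centered_sum N X)\<^sup>2 \<le> 4 * L * square_sum N X" for X
    proof -
      have pos: "0 < (real N)\<^sup>2 * sqnorm M g" using N D by simp
      have "centered_sum N X = (\<Sum>i<N. g (X i)) - real N * (\<integral>x. g x * f x \<partial>M)"
        by (simp add: centered_sum_def sum_subtractf integral_P mult.commute)
      then have lhs: "d2 M (\<lambda>x. alpha_hat M g N X * g x) (\<lambda>x. alpha_bar M f g * g x)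
          = (centered_sum N X)\<^sup>2 / ((real N)\<^sup>2 * sqnorm M g)"
        using N by (simp add: d2_alpha_hat_alpha_bar)
      have "square_sum N X = (\<Sum>i<N. (g (X i))\<^sup>2) + real N * (C * sqnorm M g)"
        by (simp add: square_sum_def sum.distrib)
      then have rhs: "4 * L / real N * (((\<Sum>i<N. (g (X i))\<^sup>2) / real N) / sqnorm M g + C)
          = 4 * L * square_sum N X / ((real N)\<^sup>2 * sqnorm M g)"
        using N D by (simp add: field_simps power2_eq_square)
      show ?thesis unfolding lhs rhs using pos by (simp add: divide_le_cancel)
    qed
    then show ?thesis by (auto simp: E_def L_def not_le)
  qed
  then show ?thesis
    using prob_deviation_le[OF _ N \<delta>] C D by (simp add: L_def)
qed

theorem theorem1:
  fixes M :: "'a measure" and f :: "'a \<Rightarrow> real" and fs :: "nat \<Rightarrow> 'a \<Rightarrow> real"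
    and m N :: nat and p :: ereal and c :: real and cs :: "nat \<Rightarrow> real" and \<epsilon> :: real
  assumes "sigma_finite_measure M"
    and "f \<in> borel_measurable M" and "\<forall>x\<in>space M. 0 \<le> f x"
    and "prob_space (density M (\<lambda>x. ennreal (f x)))"
    and "integrable M (\<lambda>x. (f x)\<^sup>2)"
    and "1 \<le> m" and "1 \<le> N"
    and "\<forall>k\<in>{1..m}. fs k \<in> borel_measurable M"
    and "\<forall>k\<in>{1..m}. integrable M (\<lambda>x. (fs k x)\<^sup>2)"
    and "\<forall>k\<in>{1..m}. sqnorm M (fs k) > 0"
    and "1 \<le> p"
    and "cond_H M f fs m p c cs"
    and "\<epsilon> > 0"
  shows "measure (PiM {..<N} (\<lambda>_. density M (\<lambda>x. ennreal (f x))))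
      {X \<in> space (PiM {..<N} (\<lambda>_. density M (\<lambda>x. ennreal (f x)))).
        \<forall>k\<in>{1..m}.
          d2 M (\<lambda>x. alpha_hat M (fs k) N X * fs k x) (\<lambda>x. alpha_bar M f (fs k) * fs k x)
          \<le> 4 * (1 + ln (2 * real m / \<epsilon>)) / real N *
             (((\<Sum>i<N. (fs k (X i))\<^sup>2) / real N) / sqnorm M (fs k) + cs k * c)}
    \<ge> 1 - \<epsilon>"
proof -
  interpret PN: prob_space "PiM {..<N} (\<lambda>_. density M (\<lambda>x. ennreal (f x)))"
    by (intro prob_space_PiM assms(4))
  define \<delta> where "\<delta> = \<epsilon> / (2 * real m)"
  have \<delta>: "0 < \<delta>" and ln_eq: "ln (2 * real m / \<epsilon>) = ln (1/\<delta>)"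
    using assms(6,13) by (simp_all add: \<delta>_def)
  show ?thesis unfolding ln_eq
  proof (rule PN.prob_all_ge_of_union_bound[where e = "2 * \<delta>"], goal_cases)
    case (2 k)
    have "0 < cs k * c" using assms(12) 2 by (simp add: cond_H_def)
    moreover have "integrable M (\<lambda>x. f x * (fs k x)\<^sup>2)
        \<and> (\<integral>x. f x * (fs k x)\<^sup>2 \<partial>M) \<le> cs k * c * sqnorm M (fs k)"
      using cond_H_weighted_square_le[OF assms(2-4)] assms(8-10,12) 2 by blast
    ultimately show ?case
      using prob_alpha_hat_deviation_le[OF assms(2-4), of "fs k" "cs k * c" N \<delta>] assms(7-10) \<delta> 2
      by simp
  qed (use assms(6) in \<open>simp_all add: \<delta>_def\<close>)
qed

end
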